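(* Let $\mathcal K$ be a compact subset of $\mathcal L_{\mathbb C}$. Then for all $x\in\mathbf S^3$ and $w\in\mathcal K$, \[d_E(x,w^\perp)=\frac{|\langle x,w\rangle|}{\|x\|\,\|w\|},\] and there is a constant $C\ge1$ (depending only on $\mathcal K$) such that for all $x\in\mathbf S^3$, $w\in\mathcal K$, \[C^{-1}d_E(x,w^\perp)\le d_E(x,L_w)\le C\,d_E(x,w^\perp),\qquad C^{-1}d_E(x,L_w)\le d(x,L_w)\le C\,d_E(x,L_w).\]
   Context: On $\mathbb{C}^3$: $u\cdot v=\sum u_i\bar v_i$, $\|u\|=\sqrt{u\cdot u}$, $\langle u,v\rangle=u_0\bar v_0-u_1\bar v_1-u_2\bar v_2$, $q(u)=\langle u,u\rangle$, $\|u\wedge v\|^2=\|u\|^2\|v\|^2-|u\cdot v|^2$. On $\mathbb P^2_{\mathbb C}$, $d_E(u,v)=\|u\wedge v\|/(\|u\|\|v\|)$. $\mathbf S^3=\{u:q(u)=0\}$ with visual metric $d(u,v)=\sqrt{|\langle u,v\rangle|/(\|u\|\|v\|)}$. $\mathcal L_{\mathbb C}=\{w\in\mathbb P^2_{\mathbb C}:q(w)<0\}$ with metric $d_E$; $w^\perp=\{u\in\mathbb P^2_{\mathbb C}:\langle u,w\rangle=0\}$ and $L_w=w^\perp\cap\mathbf S^3$ is the associated chain. Distances to sets are infima over points of the set: $d_E(x,w^\perp)$ in $\mathbb P^2_{\mathbb C}$, $d_E(x,L_w)$ and $d(x,L_w)$ over $L_w$. *)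

theory Defs
  imports "HOL-Analysis.Analysis"
begin

text \<open>Vectors of C^3 are triples; points of P^2_C are represented by nonzero vectors
  (all quantities below are invariant under nonzero scaling).\<close>

type_synonym cvec = "complex \<times> complex \<times> complex"

definition c0 :: "cvec \<Rightarrow> complex" where "c0 u = fst u"
definition c1 :: "cvec \<Rightarrow> complex" where "c1 u = fst (snd u)"
definition c2 :: "cvec \<Rightarrow> complex" where "c2 u = snd (snd u)"

definition hdot :: "cvec \<Rightarrow> cvec \<Rightarrow> complex" where
  "hdot u v = c0 u * cnj (c0 v) + c1 u * cnj (c1 v) + c2 u * cnj (c2 v)"

definition vnorm :: "cvec \<Rightarrow> real" where
  "vnorm u = sqrt (Re (hdot u u))"

definition herm :: "cvec \<Rightarrow> cvec \<Rightarrow> complex" where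
  "herm u v = c0 u * cnj (c0 v) - c1 u * cnj (c1 v) - c2 u * cnj (c2 v)"

definition qf :: "cvec \<Rightarrow> real" where
  "qf u = Re (herm u u)"

definition wedge_norm :: "cvec \<Rightarrow> cvec \<Rightarrow> real" where
  "wedge_norm u v = sqrt ((vnorm u)\<^sup>2 * (vnorm v)\<^sup>2 - (cmod (hdot u v))\<^sup>2)"

definition dE :: "cvec \<Rightarrow> cvec \<Rightarrow> real" where
  "dE u v = wedge_norm u v / (vnorm u * vnorm v)"

definition P2 :: "cvec set" where "P2 = {u. u \<noteq> 0}"

definition S3 :: "cvec set" where "S3 = {u. u \<noteq> 0 \<and> qf u = 0}"

definition dvis :: "cvec \<Rightarrow> cvec \<Rightarrow> real" where
  "dvis u v = sqrt (cmod (herm u v) / (vnorm u * vnorm v))"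

definition LC :: "cvec set" where "LC = {w. w \<noteq> 0 \<and> qf w < 0}"

definition perp :: "cvec \<Rightarrow> cvec set" where
  "perp w = {u. u \<noteq> 0 \<and> herm u w = 0}"

definition chain :: "cvec \<Rightarrow> cvec set" where
  "chain w = perp w \<inter> S3"

definition setdist_with :: "(cvec \<Rightarrow> cvec \<Rightarrow> real) \<Rightarrow> cvec \<Rightarrow> cvec set \<Rightarrow> real" where
  "setdist_with d x A = (INF u\<in>A. d x u)"

text \<open>Compactness of a subset of P^2_C with respect to the metric d_E
  (sequential compactness, equivalent to compactness for metric spaces).\<close>
definition dE_compact :: "cvec set \<Rightarrow> bool" where
  "dE_compact K \<longleftrightarrow> K \<subseteq> P2 \<and>
     (\<forall>s::nat \<Rightarrow> cvec. (\<forall>n. s n \<in> K) \<longrightarrow>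
        (\<exists>r l. strict_mono r \<and> l \<in> K \<and> (\<lambda>n. dE (s (r n)) l) \<longlonglongrightarrow> 0))"

end

theory Submission
  imports Defs
begin

text \<open>With \<open>J = diag(1,-1,-1)\<close> one has \<open><u,w> = u . Jw\<close>, so \<open>w^perp\<close> is the Euclidean
  orthogonal complement of \<open>Jw\<close>. The Euclidean projection of \<open>x\<close> to it realises
  \<open>d_E(x,w^perp) = |x . Jw| / (||x|| ||w||)\<close>, and Cauchy-Schwarz applied to the component of \<open>x\<close>
  orthogonal to any \<open>u\<close> in \<open>w^perp\<close> gives the matching lower bound. As \<open>L_w\<close> lies in
  \<open>w^perp\<close>, \<open>d_E(x,w^perp) \<le> d_E(x,L_w)\<close>. Always \<open>x . u = 2 x_0 conj(u_0) - <x,u>\<close>, and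
  \<open>2 |x_0| |u_0| = ||x|| ||u||\<close> for null \<open>x, u\<close>; hence \<open>|x . u| \<ge> ||x|| ||u|| - |<x,u>|\<close>, which
  gives \<open>d_E \<le> sqrt 2 d\<close> on \<open>S^3\<close>.

  The remaining bound needs a point of \<open>L_w\<close> close to \<open>x\<close>: the \<open><,>\<close>-projection of \<open>x\<close>
  to \<open>w^perp\<close> is a vector \<open>u_1\<close> with \<open>q(u_1) = <x,u_1> = |<x,w>|^2 / |q(w)|\<close>, and adding the
  right multiple of the Hermitian cross product of \<open>w\<close> and \<open>x\<close> makes it null without changing
  \<open><x,.>\<close> or decreasing its norm. Its visual distance to \<open>x\<close> is at most
  \<open>(2/kappa) d_E(x,w^perp)\<close> whenever \<open>kappa ||w||^2 \<le> -q(w)\<close>. Such a \<open>kappa > 0\<close> exists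
  uniformly on \<open>K\<close>: \<open>-q(w) = ||w||^2 (1 - 2 m(w)^2)\<close> with \<open>m(w) = |w_0| / ||w||\<close>, and \<open>m\<close> is
  1-Lipschitz for \<open>d_E\<close>, so by compactness it stays uniformly below \<open>1/sqrt 2\<close> on \<open>K\<close>.\<close>

lemma cvec_cases: obtains a b c where "(x::cvec) = (a, b, c)"
  by (metis prod_cases3)

lemma c012_simps [simp]: "c0 (a, b, c) = a" "c1 (a, b, c) = b" "c2 (a, b, c) = c"
  by (simp_all add: c0_def c1_def c2_def)

lemma c012_zero [simp]: "c0 0 = 0" "c1 0 = 0" "c2 0 = 0"
  by (simp_all add: c0_def c1_def c2_def)

lemma mult_cnj_eq_cmod_sq: "z * cnj z = complex_of_real ((cmod z)\<^sup>2)"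
  by (metis complex_norm_square)

lemma cnj_mult_eq_cmod_sq: "cnj z * z = complex_of_real ((cmod z)\<^sup>2)"
  by (metis mult_cnj_eq_cmod_sq mult.commute)

definition cscale :: "complex \<Rightarrow> cvec \<Rightarrow> cvec" where
  "cscale k u = (k * c0 u, k * c1 u, k * c2 u)"

definition Jdiag :: "cvec \<Rightarrow> cvec" where
  "Jdiag u = (c0 u, - c1 u, - c2 u)"

lemma cscale_zero [simp]: "cscale 0 u = 0" "cscale k 0 = 0"
  by (simp_all add: cscale_def zero_prod_def)

lemma cscale_of_real: "cscale (complex_of_real s) v = s *\<^sub>R v"
proof -
  obtain a b c where "v = (a, b, c)" by (rule cvec_cases)
  then show ?thesis by (simp add: cscale_def scaleR_conv_of_real)
qed

lemma norm_sq_components: "(norm u)\<^sup>2 = (cmod (c0 u))\<^sup>2 + (cmod (c1 u))\<^sup>2 + (cmod (c2 u))\<^sup>2"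
proof -
  obtain a b c where "u = (a, b, c)" by (rule cvec_cases)
  then show ?thesis by (simp add: norm_Pair)
qed

lemma qf_components: "qf u = (cmod (c0 u))\<^sup>2 - (cmod (c1 u))\<^sup>2 - (cmod (c2 u))\<^sup>2"
  unfolding qf_def herm_def by (simp add: mult_cnj_eq_cmod_sq)

lemma hdot_self: "hdot u u = complex_of_real ((norm u)\<^sup>2)"
  unfolding hdot_def norm_sq_components by (simp add: mult_cnj_eq_cmod_sq)

lemma vnorm_eq_norm: "vnorm u = norm u"
  unfolding vnorm_def hdot_self by simp

lemma qf_zero [simp]: "qf 0 = 0"
  unfolding qf_components by simp

lemma herm_self: "herm u u = complex_of_real (qf u)"
  unfolding herm_def qf_components by (simp add: mult_cnj_eq_cmod_sq)

lemma cmod_c0_le_norm: "cmod (c0 u) \<le> norm u"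
proof -
  have "(cmod (c0 u))\<^sup>2 \<le> (norm u)\<^sup>2"
    unfolding norm_sq_components by simp
  then show ?thesis by (rule power2_le_imp_le) simp
qed

lemma neg_qf_le_norm_sq: "- qf u \<le> (norm u)\<^sup>2"
  unfolding qf_components norm_sq_components by simp

lemma norm_sq_null: "qf x = 0 \<Longrightarrow> (norm x)\<^sup>2 = 2 * (cmod (c0 x))\<^sup>2"
  unfolding qf_components norm_sq_components by simp

lemma hdot_cnj_swap: "hdot b a = cnj (hdot a b)"
  unfolding hdot_def by (simp add: mult.commute)

lemma herm_cnj_swap: "herm b a = cnj (herm a b)"
  unfolding herm_def by (simp add: mult.commute)

lemma hdot_add_left: "hdot (a + b) c = hdot a c + hdot b c"
  and hdot_diff_left: "hdot (a - b) c = hdot a c - hdot b c"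
  and herm_add_left: "herm (a + b) c = herm a c + herm b c"
  and herm_diff_left: "herm (a - b) c = herm a c - herm b c"
proof -
  obtain a0 a1 a2 where a: "a = (a0, a1, a2)" by (rule cvec_cases)
  obtain b0 b1 b2 where b: "b = (b0, b1, b2)" by (rule cvec_cases)
  show "hdot (a + b) c = hdot a c + hdot b c" "hdot (a - b) c = hdot a c - hdot b c"
    "herm (a + b) c = herm a c + herm b c" "herm (a - b) c = herm a c - herm b c"
    unfolding a b hdot_def herm_def by (simp_all add: algebra_simps)
qed

lemma hdot_cscale_left: "hdot (cscale k a) c = k * hdot a c"
  and herm_cscale_left: "herm (cscale k a) c = k * herm a c"
  unfolding hdot_def herm_def cscale_def by (simp_all add: algebra_simps)

lemma hdot_add_right: "hdot c (a + b) = hdot c a + hdot c b"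
  and hdot_diff_right: "hdot c (a - b) = hdot c a - hdot c b"
  and hdot_cscale_right: "hdot c (cscale k a) = cnj k * hdot c a"
  by (simp_all add: hdot_cnj_swap[of c] hdot_add_left hdot_diff_left hdot_cscale_left)

lemma herm_add_right: "herm c (a + b) = herm c a + herm c b"
  and herm_diff_right: "herm c (a - b) = herm c a - herm c b"
  and herm_cscale_right: "herm c (cscale k a) = cnj k * herm c a"
  by (simp_all add: herm_cnj_swap[of c] herm_add_left herm_diff_left herm_cscale_left)

lemmas sesqui_simps = hdot_add_left hdot_diff_left hdot_cscale_left herm_add_left
  herm_diff_left herm_cscale_left hdot_add_right hdot_diff_right hdot_cscale_right
  herm_add_right herm_diff_right herm_cscale_right

lemma hdot_zero [simp]: "hdot 0 u = 0" "hdot u 0 = 0"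
  and herm_zero [simp]: "herm 0 u = 0" "herm u 0 = 0"
  by (simp_all add: hdot_def herm_def)

lemma herm_eq_hdot_Jdiag: "herm a w = hdot a (Jdiag w)"
  unfolding herm_def hdot_def Jdiag_def by simp

lemma norm_Jdiag: "norm (Jdiag w) = norm w"
proof -
  have "(norm (Jdiag w))\<^sup>2 = (norm w)\<^sup>2"
    unfolding norm_sq_components by (simp add: Jdiag_def)
  then show ?thesis by (metis norm_ge_zero power2_eq_iff_nonneg)
qed

lemma qf_Jdiag: "qf (Jdiag w) = qf w"
  unfolding qf_components by (simp add: Jdiag_def)

lemma qf_cscale: "qf (cscale k u) = (cmod k)\<^sup>2 * qf u"
  unfolding qf_components by (simp add: cscale_def norm_mult algebra_simps)

lemma qf_add_orth: "herm a b = 0 \<Longrightarrow> qf (a + b) = qf a + qf b"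
  using herm_cnj_swap[of b a] unfolding qf_def by (simp add: sesqui_simps)

lemma norm_cscale: "norm (cscale k u) = cmod k * norm u"
proof -
  have "(norm (cscale k u))\<^sup>2 = (cmod k * norm u)\<^sup>2"
    unfolding norm_sq_components power_mult_distrib[of _ "norm u"]
    by (simp add: cscale_def norm_mult power_mult_distrib distrib_left)
  then show ?thesis by (metis norm_ge_zero zero_le_mult_iff power2_eq_iff_nonneg)
qed

lemma hdot_cauchy_schwarz: "cmod (hdot x u) \<le> norm x * norm u"
proof (cases "hdot x u = 0")
  case False
  define k where "k = cnj (hdot x u) / complex_of_real (cmod (hdot x u))"
  have "cmod (hdot x u) = Re (hdot (cscale k x) u)"
    using False by (simp add: k_def hdot_cscale_left cnj_mult_eq_cmod_sq power2_eq_square)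
  also have "\<dots> = inner (cscale k x) u"
    by (cases x, cases u) (simp add: hdot_def cscale_def c0_def c1_def c2_def inner_complex_def)
  also have "\<dots> \<le> norm (cscale k x) * norm u"
    by (rule norm_cauchy_schwarz)
  also have "norm (cscale k x) = norm x"
    using False by (simp add: k_def norm_cscale norm_divide)
  finally show ?thesis .
qed simp

lemma herm_cauchy_schwarz: "cmod (herm x u) \<le> norm x * norm u"
  using hdot_cauchy_schwarz[of x "Jdiag u"] by (simp add: herm_eq_hdot_Jdiag norm_Jdiag)

lemma dE_eq: "dE x u = sqrt ((norm x)\<^sup>2 * (norm u)\<^sup>2 - (cmod (hdot x u))\<^sup>2) / (norm x * norm u)"
  unfolding dE_def wedge_norm_def vnorm_eq_norm ..

lemma dE_nonneg: "0 \<le> dE x u"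
proof -
  have "(cmod (hdot x u))\<^sup>2 \<le> (norm x * norm u)\<^sup>2"
    using hdot_cauchy_schwarz[of x u] by (simp add: power_mono)
  then show ?thesis
    unfolding dE_eq by (simp add: power_mult_distrib)
qed

lemma dvis_nonneg: "0 \<le> dvis x u"
  unfolding dvis_def vnorm_eq_norm by simp

definition orth_comp :: "cvec \<Rightarrow> cvec \<Rightarrow> cvec" where
  "orth_comp l a = a - cscale (hdot a l / complex_of_real ((norm l)\<^sup>2)) l"

lemma orth_comp_decomp: "a = orth_comp l a + cscale (hdot a l / complex_of_real ((norm l)\<^sup>2)) l"
  unfolding orth_comp_def by simp

lemma hdot_orth_comp: "hdot (orth_comp l a) l = 0"
  by (cases "l = 0") (simp_all add: orth_comp_def sesqui_simps hdot_self)

lemma norm_orth_comp_sq: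
  "(norm (orth_comp l a))\<^sup>2 = (norm a)\<^sup>2 - (cmod (hdot a l))\<^sup>2 / (norm l)\<^sup>2"
proof -
  define y where "y = orth_comp l a"
  have "hdot y y = hdot y a"
    using arg_cong[where f = "hdot y", OF orth_comp_decomp[of a l]]
    by (simp add: y_def sesqui_simps hdot_orth_comp)
  also have "\<dots> = cnj (hdot a y)"
    by (rule hdot_cnj_swap)
  also have "hdot a y = complex_of_real ((norm a)\<^sup>2 - (cmod (hdot a l))\<^sup>2 / (norm l)\<^sup>2)"
    by (simp add: y_def orth_comp_def sesqui_simps hdot_self hdot_cnj_swap[of l a]
        cnj_mult_eq_cmod_sq)
  finally show ?thesis
    unfolding y_def hdot_self by (metis Complex.complex_cnj_complex_of_real of_real_eq_iff)
qed

lemma norm_orth_comp: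
  assumes "l \<noteq> 0"
  shows "norm (orth_comp l a) = norm a * dE a l"
proof -
  define p where "p = cmod (hdot a l)"
  have "norm a * dE a l = sqrt ((norm a)\<^sup>2 * (norm l)\<^sup>2 - p\<^sup>2) / norm l"
    by (cases "a = 0") (simp_all add: dE_eq p_def)
  also have "\<dots> = sqrt (((norm a)\<^sup>2 * (norm l)\<^sup>2 - p\<^sup>2) / (norm l)\<^sup>2)"
    by (simp add: real_sqrt_divide)
  also have "\<dots> = sqrt ((norm a)\<^sup>2 - p\<^sup>2 / (norm l)\<^sup>2)"
    using assms by (simp add: diff_divide_distrib)
  also have "\<dots> = sqrt ((norm (orth_comp l a))\<^sup>2)"
    by (simp only: norm_orth_comp_sq p_def)
  also have "\<dots> = norm (orth_comp l a)"
    by simp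
  finally show ?thesis ..
qed

lemma herm_ratio_le_dE:
  assumes "u \<noteq> 0" and "herm u w = 0"
  shows "cmod (herm x w) / (norm x * norm w) \<le> dE x u"
proof -
  have "hdot u (Jdiag w) = 0"
    using assms(2) by (simp add: herm_eq_hdot_Jdiag)
  then have "herm x w = hdot (orth_comp u x) (Jdiag w)"
    by (simp add: herm_eq_hdot_Jdiag orth_comp_def sesqui_simps)
  then have "cmod (herm x w) \<le> norm x * dE x u * norm w"
    using hdot_cauchy_schwarz[of "orth_comp u x" "Jdiag w"]
    by (simp add: norm_orth_comp[OF assms(1)] norm_Jdiag)
  then show ?thesis
    by (cases "norm x * norm w = 0") (auto simp: dE_nonneg pos_divide_le_eq mult_ac)
qed

lemma orth_comp_Jdiag_in_perp:
  assumes "x \<noteq> 0" "0 \<le> qf x" "qf w < 0"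
  shows "orth_comp (Jdiag w) x \<in> perp w"
proof -
  define k where "k = hdot x (Jdiag w) / complex_of_real ((norm (Jdiag w))\<^sup>2)"
  have "orth_comp (Jdiag w) x \<noteq> 0"
  proof
    assume "orth_comp (Jdiag w) x = 0"
    then have x: "x = cscale k (Jdiag w)"
      using orth_comp_decomp[of x "Jdiag w"] by (simp add: k_def)
    then have "0 \<le> (cmod k)\<^sup>2 * qf w"
      using assms(2) by (simp add: qf_cscale qf_Jdiag)
    then have "k = 0"
      using assms(3) by (simp add: zero_le_mult_iff)
    then show False
      using x assms(1) by simp
  qed
  then show ?thesis
    by (simp add: perp_def herm_eq_hdot_Jdiag hdot_orth_comp)
qed

lemma dE_orth_comp_Jdiag:
  assumes "x \<noteq> 0" "w \<noteq> 0" "orth_comp (Jdiag w) x \<noteq> 0"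
  shows "dE x (orth_comp (Jdiag w) x) = cmod (herm x w) / (norm x * norm w)"
proof -
  define n where "n = Jdiag w"
  define y where "y = orth_comp n x"
  define k where "k = hdot x n / complex_of_real ((norm n)\<^sup>2)"
  have "x = y + cscale k n"
    unfolding y_def k_def by (rule orth_comp_decomp)
  then have "hdot x y = hdot y y + k * cnj (hdot y n)"
    by (metis hdot_add_left hdot_cscale_left hdot_cnj_swap)
  then have xy: "cmod (hdot x y) = (norm y)\<^sup>2"
    by (simp add: y_def hdot_orth_comp hdot_self norm_power)
  have "(norm x)\<^sup>2 - (norm y)\<^sup>2 = (cmod (herm x w) / norm w)\<^sup>2"
    by (simp add: y_def n_def norm_orth_comp_sq herm_eq_hdot_Jdiag norm_Jdiag power_divide)
  then have "(norm x)\<^sup>2 * (norm y)\<^sup>2 - (cmod (hdot x y))\<^sup>2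
      = (norm y * cmod (herm x w) / norm w)\<^sup>2"
    unfolding xy by (simp add: power_divide algebra_simps power2_eq_square)
  then have "dE x y = norm y * cmod (herm x w) / norm w / (norm x * norm y)"
    by (simp add: dE_eq)
  then show ?thesis
    using assms(3) by (simp add: y_def n_def)
qed

lemma setdist_with_le:
  assumes "\<And>u. u \<in> A \<Longrightarrow> 0 \<le> d x u" and "u \<in> A"
  shows "setdist_with d x A \<le> d x u"
  unfolding setdist_with_def by (rule cINF_lower) (auto intro: bdd_belowI2 assms)

lemma setdist_with_ge:
  "A \<noteq> {} \<Longrightarrow> (\<And>u. u \<in> A \<Longrightarrow> m \<le> d x u) \<Longrightarrow> m \<le> setdist_with d x A"
  unfolding setdist_with_def by (rule cINF_greatest)

lemma setdist_with_antimono: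
  assumes "\<And>u. u \<in> B \<Longrightarrow> 0 \<le> d x u" and "A \<noteq> {}" and "A \<subseteq> B"
  shows "setdist_with d x B \<le> setdist_with d x A"
  unfolding setdist_with_def using assms(2,3)
  by (intro cINF_superset_mono) (auto intro: bdd_belowI2 assms(1))

lemma setdist_dE_perp:
  assumes "x \<noteq> 0" "0 \<le> qf x" "w \<in> LC"
  shows "setdist_with dE x (perp w) = cmod (herm x w) / (vnorm x * vnorm w)"
proof (rule antisym)
  have w: "w \<noteq> 0" "qf w < 0"
    using assms(3) by (auto simp: LC_def)
  have y: "orth_comp (Jdiag w) x \<in> perp w"
    using orth_comp_Jdiag_in_perp assms(1,2) w(2) .
  show "setdist_with dE x (perp w) \<le> cmod (herm x w) / (vnorm x * vnorm w)"
    using setdist_with_le[where d = dE and x = x, OF dE_nonneg y]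
      dE_orth_comp_Jdiag[OF assms(1) w(1)] y
    by (simp add: perp_def vnorm_eq_norm)
  show "cmod (herm x w) / (vnorm x * vnorm w) \<le> setdist_with dE x (perp w)"
  proof (rule setdist_with_ge)
    show "perp w \<noteq> {}"
      using y by blast
  qed (auto simp: perp_def vnorm_eq_norm intro: herm_ratio_le_dE)
qed

lemma hdot_eq_c0_diff_herm: "hdot x u = 2 * (c0 x * cnj (c0 u)) - herm x u"
  unfolding hdot_def herm_def by simp

lemma dE_le_sqrt2_dvis:
  assumes "x \<in> S3" and "u \<in> S3"
  shows "dE x u \<le> sqrt 2 * dvis x u"
proof -
  have null: "qf x = 0" "qf u = 0" and nz: "x \<noteq> 0" "u \<noteq> 0"
    using assms by (auto simp: S3_def)
  define N where "N = norm x * norm u"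
  define h where "h = cmod (herm x u)"
  define p where "p = cmod (hdot x u)"
  have N: "N > 0"
    using nz by (simp add: N_def)
  have "(2 * (cmod (c0 x) * cmod (c0 u)))\<^sup>2 = N\<^sup>2"
    unfolding N_def power_mult_distrib norm_sq_null[OF null(1)] norm_sq_null[OF null(2)] by simp
  then have "2 * (cmod (c0 x) * cmod (c0 u)) = N"
    by (rule power2_eq_imp_eq) (use N in auto)
  then have c0N: "2 * cmod (c0 x * cnj (c0 u)) = N"
    by (simp add: norm_mult)
  have hN: "h \<le> N"
    unfolding h_def N_def by (rule herm_cauchy_schwarz)
  have "N - h \<le> p"
    using norm_triangle_ineq2[of "2 * (c0 x * cnj (c0 u))" "herm x u"] c0N
    by (simp add: p_def h_def hdot_eq_c0_diff_herm norm_mult)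
  then have "(N - h)\<^sup>2 \<le> p\<^sup>2"
    using hN by (simp add: power_mono)
  moreover have "(N - h)\<^sup>2 = N\<^sup>2 - 2 * h * N + h\<^sup>2"
    by (simp add: power2_eq_square algebra_simps)
  ultimately have key: "N\<^sup>2 - p\<^sup>2 \<le> 2 * h * N"
    using zero_le_power2[of h] by linarith
  have "dE x u = sqrt (N\<^sup>2 - p\<^sup>2) / N"
    by (simp add: dE_eq N_def p_def power_mult_distrib)
  also have "\<dots> = sqrt ((N\<^sup>2 - p\<^sup>2) / N\<^sup>2)"
    using N by (simp add: real_sqrt_divide)
  also have "\<dots> \<le> sqrt (2 * (h / N))"
  proof (rule real_sqrt_le_mono)
    show "(N\<^sup>2 - p\<^sup>2) / N\<^sup>2 \<le> 2 * (h / N)"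
      using key N by (simp add: divide_le_eq power2_eq_square algebra_simps)
  qed
  also have "\<dots> = sqrt 2 * dvis x u"
    unfolding dvis_def vnorm_eq_norm h_def N_def by (simp only: real_sqrt_mult)
  finally show ?thesis .
qed

lemma dvis_le_one: "dvis x u \<le> 1"
proof -
  have "cmod (herm x u) / (norm x * norm u) \<le> 1"
    using herm_cauchy_schwarz[of x u]
    by (cases "norm x * norm u = 0") (simp_all add: divide_le_eq_1)
  then show ?thesis
    by (simp add: dvis_def vnorm_eq_norm)
qed

text \<open>\<open>herm a (herm_cross w x)\<close> is the determinant with rows \<open>a, w, x\<close>.\<close>

definition herm_cross :: "cvec \<Rightarrow> cvec \<Rightarrow> cvec" where
  "herm_cross w x = (cnj (c1 w * c2 x - c2 w * c1 x), - cnj (c2 w * c0 x - c0 w * c2 x),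
     - cnj (c0 w * c1 x - c1 w * c0 x))"

lemma herm_cross_orth: "herm (herm_cross w x) w = 0" "herm (herm_cross w x) x = 0"
proof -
  obtain a b c where w: "w = (a, b, c)" by (rule cvec_cases)
  obtain d e f where x: "x = (d, e, f)" by (rule cvec_cases)
  show "herm (herm_cross w x) w = 0" "herm (herm_cross w x) x = 0"
    unfolding w x herm_def herm_cross_def by (simp, algebra)+
qed

lemma qf_herm_cross: "qf (herm_cross w x) = qf w * qf x - (cmod (herm w x))\<^sup>2"
proof -
  obtain a b c where w: "w = (a, b, c)" by (rule cvec_cases)
  obtain d e f where x: "x = (d, e, f)" by (rule cvec_cases)
  have "herm (herm_cross w x) (herm_cross w x) = herm w w * herm x x - herm w x * herm x w"
    unfolding w x herm_def herm_cross_def by simp algebra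
  then have "complex_of_real (qf (herm_cross w x))
      = complex_of_real (qf w * qf x - (cmod (herm w x))\<^sup>2)"
    by (simp add: herm_self herm_cnj_swap[of x w] mult_cnj_eq_cmod_sq)
  then show ?thesis
    by (simp only: of_real_eq_iff)
qed

lemma norm_le_norm_add_signed_scaleR:
  fixes a b :: "'a::real_inner"
  obtains s where "\<bar>s\<bar> = \<bar>c\<bar>" "norm a \<le> norm (a + s *\<^sub>R b)"
proof -
  define s where "s = (if 0 \<le> c * inner a b then c else - c)"
  have "(norm (a + s *\<^sub>R b))\<^sup>2 = (norm a)\<^sup>2 + 2 * (s * inner a b) + s\<^sup>2 * (norm b)\<^sup>2"
    unfolding power2_norm_eq_inner
    by (simp add: inner_commute[of b a] algebra_simps power2_eq_square)
  moreover have "0 \<le> s * inner a b"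
    by (simp add: s_def)
  ultimately have "(norm a)\<^sup>2 \<le> (norm (a + s *\<^sub>R b))\<^sup>2"
    by simp
  then have "norm a \<le> norm (a + s *\<^sub>R b)"
    by (rule power2_le_imp_le) simp
  then show thesis
    by (rule that[rotated]) (simp add: s_def)
qed

definition herm_orth_comp :: "cvec \<Rightarrow> cvec \<Rightarrow> cvec" where
  "herm_orth_comp w x = x - cscale (herm x w / complex_of_real (qf w)) w"

lemma herm_herm_orth_comp:
  assumes "qf w \<noteq> 0"
  shows "herm (herm_orth_comp w x) w = 0"
    and "herm x (herm_orth_comp w x) = complex_of_real (qf x - (cmod (herm x w))\<^sup>2 / qf w)"
    and "qf (herm_orth_comp w x) = qf x - (cmod (herm x w))\<^sup>2 / qf w"
proof -
  show orth: "herm (herm_orth_comp w x) w = 0"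
    using assms by (simp add: herm_orth_comp_def sesqui_simps herm_self)
  show x: "herm x (herm_orth_comp w x) = complex_of_real (qf x - (cmod (herm x w))\<^sup>2 / qf w)"
    by (simp add: herm_orth_comp_def sesqui_simps herm_self cnj_mult_eq_cmod_sq)
  have "herm w (herm_orth_comp w x) = 0"
    using orth herm_cnj_swap[of "herm_orth_comp w x" w] by simp
  then have "herm (herm_orth_comp w x) (herm_orth_comp w x) = herm x (herm_orth_comp w x)"
    by (subst (1) herm_orth_comp_def) (simp add: sesqui_simps)
  then show "qf (herm_orth_comp w x) = qf x - (cmod (herm x w))\<^sup>2 / qf w"
    unfolding herm_self x by (simp only: of_real_eq_iff)
qed

lemma norm_herm_orth_comp_ge:
  "norm x - cmod (herm x w) * norm w / \<bar>qf w\<bar> \<le> norm (herm_orth_comp w x)"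
  using norm_triangle_ineq2[of x "cscale (herm x w / complex_of_real (qf w)) w"]
  by (simp add: herm_orth_comp_def norm_cscale norm_divide)

lemma chain_point:
  assumes "x \<in> S3" and "qf w < 0"
  obtains u where "u \<in> chain w" "cmod (herm x u) = (cmod (herm x w))\<^sup>2 / - qf w"
    "norm x - cmod (herm x w) * norm w / - qf w \<le> norm u"
proof -
  define h where "h = herm x w"
  define u1 where "u1 = herm_orth_comp w x"
  define v where "v = herm_cross w x"
  have x: "qf x = 0" "x \<noteq> 0"
    using assms(1) by (auto simp: S3_def)
  note u1 = herm_herm_orth_comp[of w x, folded u1_def h_def, unfolded x(1)]
  have u1v: "herm u1 v = 0"
    using herm_cross_orth[of w x] herm_cnj_swap[of v x] herm_cnj_swap[of v w]
    by (simp add: u1_def herm_orth_comp_def v_def sesqui_simps)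
  have qv: "qf v = - (cmod h)\<^sup>2"
    using x(1) by (simp add: v_def qf_herm_cross h_def herm_cnj_swap[of w x])
  obtain s where s: "\<bar>s\<bar> = \<bar>1 / sqrt (- qf w)\<bar>" "norm u1 \<le> norm (u1 + s *\<^sub>R v)"
    by (rule norm_le_norm_add_signed_scaleR)
  define u where "u = u1 + cscale (complex_of_real s) v"
  have "(cmod (complex_of_real s))\<^sup>2 = 1 / - qf w"
    using s(1) assms(2) by (simp add: power2_eq_square abs_mult_self_eq[of s, symmetric])
  then have "qf u = 0"
    using u1v u1(3) assms(2) by (simp add: u_def qf_add_orth sesqui_simps qf_cscale qv)
  moreover have "herm u w = 0"
    using u1(1) assms(2) herm_cross_orth(1)[of w x] by (simp add: u_def v_def sesqui_simps)
  moreover have "u \<noteq> 0"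
  proof
    assume "u = 0"
    then have "u1 = 0"
      using s(2) by (simp add: u_def cscale_of_real)
    then have "h = 0"
      using u1(3) assms(2) by simp
    then show False
      using \<open>u1 = 0\<close> x(2) by (simp add: u1_def herm_orth_comp_def h_def)
  qed
  ultimately have "u \<in> chain w"
    by (simp add: chain_def perp_def S3_def)
  moreover have "herm x u = herm x u1"
    using herm_cross_orth(2)[of w x] herm_cnj_swap[of v x] by (simp add: u_def v_def sesqui_simps)
  then have "cmod (herm x u) = (cmod h)\<^sup>2 / - qf w"
    using u1(2) assms(2) by (simp add: norm_divide norm_power)
  moreover have "norm x - cmod h * norm w / - qf w \<le> norm u"
    using norm_herm_orth_comp_ge[of x w] assms(2) s(2)
    by (simp add: h_def u1_def u_def cscale_of_real)
  ultimately show thesis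
    by (intro that) (simp_all add: h_def)
qed

lemma dvis_chain_point_le:
  assumes "x \<in> S3" and "qf w < 0" and "0 < \<kappa>" and "\<kappa> * (norm w)\<^sup>2 \<le> - qf w"
  obtains u where "u \<in> chain w" "dvis x u \<le> 2 / \<kappa> * (cmod (herm x w) / (norm x * norm w))"
proof -
  obtain u where u: "u \<in> chain w" "cmod (herm x u) = (cmod (herm x w))\<^sup>2 / - qf w"
    "norm x - cmod (herm x w) * norm w / - qf w \<le> norm u"
    using chain_point assms(1,2) .
  define r where "r = cmod (herm x w) / (norm x * norm w)"
  have pos: "0 < norm x" "0 < norm w" "0 < norm u"
    using assms(1,2) u(1) by (auto simp: S3_def chain_def perp_def)
  have "\<kappa> * (norm w)\<^sup>2 \<le> 1 * (norm w)\<^sup>2"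
    using assms(4) neg_qf_le_norm_sq[of w] by simp
  then have "\<kappa> \<le> 1"
    using pos(2) by (simp only: mult_le_cancel_right) simp
  have "dvis x u \<le> 2 / \<kappa> * r"
  proof (cases "\<kappa> / 2 \<le> r")
    case True
    then have "1 \<le> 2 / \<kappa> * r"
      using assms(3) by (simp add: field_simps)
    then show ?thesis
      using dvis_le_one[of x u] by linarith
  next
    case False
    have "cmod (herm x w) * norm w / - qf w \<le> cmod (herm x w) * norm w / (\<kappa> * (norm w)\<^sup>2)"
      using assms(2,3,4) pos by (intro divide_left_mono) (auto simp: mult_neg_pos)
    also have "\<dots> = r * norm x / \<kappa>"
      using pos by (simp add: r_def power2_eq_square)
    also have "\<dots> < norm x / 2"
      using False pos assms(3) by (simp add: field_simps)
    finally have U: "norm x / 2 < norm u"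
      using u(3) by linarith
    have "(dvis x u)\<^sup>2 = cmod (herm x u) / (norm x * norm u)"
      by (simp add: dvis_def vnorm_eq_norm)
    also have "\<dots> = (cmod (herm x w))\<^sup>2 / (- qf w * (norm x * norm u))"
      using u(2) by simp
    also have "\<dots> \<le> (cmod (herm x w))\<^sup>2 / (\<kappa> * (norm w)\<^sup>2 * (norm x * (norm x / 2)))"
      using assms(2-4) pos U
      by (intro divide_left_mono mult_mono mult_left_mono) (auto simp: mult_neg_pos)
    also have "\<dots> = 2 / \<kappa> * r\<^sup>2"
      using pos by (simp add: r_def field_simps power2_eq_square)
    also have "\<dots> \<le> (2 / \<kappa> * r)\<^sup>2"
      using \<open>\<kappa> \<le> 1\<close> assms(3) mult_right_mono[of \<kappa> 2 "r * r"]
      by (simp add: power2_eq_square field_simps)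
    finally show ?thesis
      by (rule power2_le_imp_le) (use assms(3) pos in \<open>simp add: r_def\<close>)
  qed
  then show thesis
    using that u(1) by (simp add: r_def)
qed

lemma c0_ratio_le_add_dE:
  assumes "a \<noteq> 0" and "l \<noteq> 0"
  shows "cmod (c0 a) / norm a \<le> cmod (c0 l) / norm l + dE a l"
proof -
  define k where "k = hdot a l / complex_of_real ((norm l)\<^sup>2)"
  have "cmod (c0 a) = cmod (c0 (orth_comp l a) + k * c0 l)"
    using arg_cong[where f = c0, OF orth_comp_decomp[of a l]]
    by (simp add: k_def cscale_def c0_def)
  also have "\<dots> \<le> norm (orth_comp l a) + cmod k * cmod (c0 l)"
    by (metis norm_triangle_ineq norm_mult cmod_c0_le_norm add_mono order_refl order_trans)
  also have "\<dots> \<le> norm a * dE a l + norm a / norm l * cmod (c0 l)"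
  proof -
    have "cmod k \<le> norm a * norm l / (norm l)\<^sup>2"
      using hdot_cauchy_schwarz[of a l] by (simp add: k_def norm_divide norm_power divide_right_mono)
    then have "cmod k \<le> norm a / norm l"
      using assms(2) by (simp add: power2_eq_square)
    then have "cmod k * cmod (c0 l) \<le> norm a / norm l * cmod (c0 l)"
      by (rule mult_right_mono) simp
    then show ?thesis
      by (simp add: norm_orth_comp[OF assms(2)])
  qed
  finally show ?thesis
    using assms(1) by (simp add: field_simps)
qed

lemma dE_compact_uniform_gap:
  assumes "dE_compact K"
    and "\<And>a l. a \<in> K \<Longrightarrow> l \<in> K \<Longrightarrow> f a \<le> f l + dE a l"
    and "\<And>w. w \<in> K \<Longrightarrow> f w < c"
  obtains \<epsilon> where "0 < \<epsilon>" "\<And>w. w \<in> K \<Longrightarrow> f w + \<epsilon> \<le> c"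
proof (rule ccontr)
  assume "\<not> thesis"
  then have "\<exists>w\<in>K. c < f w + inverse (real (Suc n))" for n
    using that[of "inverse (real (Suc n))"] by (force simp: not_le)
  then obtain s where s: "\<And>n. s n \<in> K" "\<And>n. c < f (s n) + inverse (real (Suc n))"
    by metis
  obtain r l where r: "strict_mono r" "l \<in> K" "(\<lambda>n. dE (s (r n)) l) \<longlonglongrightarrow> 0"
    using assms(1) s(1) unfolding dE_compact_def by blast
  have "(\<lambda>n. inverse (real (Suc (r n)))) \<longlonglongrightarrow> 0"
    using LIMSEQ_subseq_LIMSEQ[OF LIMSEQ_inverse_real_of_nat r(1)] by (simp add: o_def)
  then have "(\<lambda>n. f l + dE (s (r n)) l + inverse (real (Suc (r n)))) \<longlonglongrightarrow> f l + 0 + 0"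
    by (intro tendsto_add tendsto_const r(3))
  moreover have "c \<le> f l + dE (s (r n)) l + inverse (real (Suc (r n)))" for n
    using s(2)[of "r n"] assms(2)[OF s(1) r(2), of "r n"] by linarith
  ultimately have "c \<le> f l"
    by (intro LIMSEQ_le_const) auto
  then show False
    using assms(3)[OF r(2)] by simp
qed

lemma dE_compact_negative_uniform:
  assumes "K \<subseteq> LC" and "dE_compact K"
  obtains \<kappa> where "0 < \<kappa>" "\<And>w. w \<in> K \<Longrightarrow> \<kappa> * (norm w)\<^sup>2 \<le> - qf w"
proof -
  define m where "m w = cmod (c0 w) / norm w" for w
  define \<sigma> where "\<sigma> = sqrt (1 / 2 :: real)"
  have K: "w \<noteq> 0" "qf w < 0" if "w \<in> K" for w
    using assms(1) that by (auto simp: LC_def)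
  have neg_qf: "- qf w = (norm w)\<^sup>2 * (1 - 2 * (m w)\<^sup>2)" if "w \<noteq> 0" for w
  proof -
    have "(norm w)\<^sup>2 * (1 - 2 * (m w)\<^sup>2) = (norm w)\<^sup>2 - 2 * (cmod (c0 w))\<^sup>2"
      using that by (simp add: m_def field_simps)
    then show ?thesis
      using norm_sq_components[of w] qf_components[of w] by linarith
  qed
  have "m w < \<sigma>" if "w \<in> K" for w
  proof -
    have "0 < (norm w)\<^sup>2 * (1 - 2 * (m w)\<^sup>2)"
      using neg_qf[OF K(1)[OF that]] K(2)[OF that] by linarith
    then have "(m w)\<^sup>2 < 1 / 2"
      using K(1)[OF that] by (simp add: zero_less_mult_iff)
    then show ?thesis
      unfolding \<sigma>_def by (rule real_less_rsqrt)
  qed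
  moreover have "m a \<le> m l + dE a l" if "a \<in> K" "l \<in> K" for a l
    unfolding m_def using that by (intro c0_ratio_le_add_dE K(1))
  ultimately obtain \<epsilon> where \<epsilon>: "0 < \<epsilon>" "\<And>w. w \<in> K \<Longrightarrow> m w + \<epsilon> \<le> \<sigma>"
    using dE_compact_uniform_gap[OF assms(2)] by metis
  have pos: "0 < \<epsilon> * \<sigma>"
    using \<epsilon>(1) by (simp add: \<sigma>_def)
  have "\<epsilon> * \<sigma> * (norm w)\<^sup>2 \<le> - qf w" if "w \<in> K" for w
  proof -
    have "\<epsilon> * \<sigma> \<le> (\<sigma> - m w) * (\<sigma> + m w)"
      using \<epsilon>(1) \<epsilon>(2)[OF that] by (intro mult_mono) (auto simp: m_def \<sigma>_def)
    also have "\<dots> = 1 / 2 - (m w)\<^sup>2"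
      by (simp add: \<sigma>_def algebra_simps power2_eq_square)
    finally have "\<epsilon> * \<sigma> \<le> 1 - 2 * (m w)\<^sup>2"
      using pos by linarith
    then have "\<epsilon> * \<sigma> * (norm w)\<^sup>2 \<le> (1 - 2 * (m w)\<^sup>2) * (norm w)\<^sup>2"
      by (rule mult_right_mono) simp
    then show ?thesis
      using neg_qf[OF K(1)[OF that]] by (simp add: mult.commute)
  qed
  with pos show thesis
    by (rule that)
qed

lemma setdist_dE_le_sqrt2_setdist_dvis:
  assumes "x \<in> S3" and "A \<subseteq> S3" and "A \<noteq> {}"
  shows "setdist_with dE x A \<le> sqrt 2 * setdist_with dvis x A"
proof -
  have "setdist_with dE x A / sqrt 2 \<le> setdist_with dvis x A"
  proof (rule setdist_with_ge[OF assms(3)])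
    fix u
    assume u: "u \<in> A"
    have "setdist_with dE x A \<le> dE x u"
      by (rule setdist_with_le[where d = dE and x = x, OF dE_nonneg u])
    also have "\<dots> \<le> sqrt 2 * dvis x u"
      using assms u by (intro dE_le_sqrt2_dvis) auto
    finally show "setdist_with dE x A / sqrt 2 \<le> dvis x u"
      by (simp add: pos_divide_le_eq mult.commute)
  qed
  then show ?thesis
    by (simp add: pos_divide_le_eq mult.commute)
qed

lemma setdist_chain_bounds:
  assumes "x \<in> S3" and "qf w < 0" and "0 < \<kappa>" and "\<kappa> * (norm w)\<^sup>2 \<le> - qf w"
  shows "0 \<le> setdist_with dE x (perp w)"
    and "setdist_with dE x (perp w) \<le> setdist_with dE x (chain w)"
    and "setdist_with dE x (chain w) \<le> 2 * setdist_with dvis x (chain w)"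
    and "2 * setdist_with dvis x (chain w) \<le> 4 / \<kappa> * setdist_with dE x (perp w)"
proof -
  obtain u where u: "u \<in> chain w" "dvis x u \<le> 2 / \<kappa> * (cmod (herm x w) / (norm x * norm w))"
    using dvis_chain_point_le[OF assms] .
  have ne: "chain w \<noteq> {}"
    using u(1) by blast
  show "setdist_with dE x (perp w) \<le> setdist_with dE x (chain w)"
    using ne by (intro setdist_with_antimono dE_nonneg) (auto simp: chain_def)
  have "setdist_with dE x (chain w) \<le> sqrt 2 * setdist_with dvis x (chain w)"
    using assms(1) ne by (intro setdist_dE_le_sqrt2_setdist_dvis) (auto simp: chain_def)
  moreover have "sqrt 2 \<le> (2 :: real)"
    using real_sqrt_le_mono[of 2 4] by simp
  moreover have "0 \<le> setdist_with dvis x (chain w)"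
    using ne by (intro setdist_with_ge dvis_nonneg)
  ultimately show "setdist_with dE x (chain w) \<le> 2 * setdist_with dvis x (chain w)"
    by (meson mult_right_mono order_trans)
  have "w \<noteq> 0"
    using assms(2) by auto
  then have perp: "setdist_with dE x (perp w) = cmod (herm x w) / (norm x * norm w)"
    using assms(1,2) setdist_dE_perp[of x w] by (auto simp: S3_def LC_def vnorm_eq_norm)
  then show "0 \<le> setdist_with dE x (perp w)"
    by simp
  show "2 * setdist_with dvis x (chain w) \<le> 4 / \<kappa> * setdist_with dE x (perp w)"
    using setdist_with_le[where d = dvis and x = x, OF dvis_nonneg u(1)] u(2) perp by simp
qed

lemma mutual_bounds_by_constant:
  fixes r E V C :: real
  assumes "0 \<le> r" "r \<le> E" "E \<le> 2 * V" "2 * V \<le> C * r" "2 \<le> C"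
  shows "inverse C * r \<le> E \<and> E \<le> C * r \<and> inverse C * E \<le> V \<and> V \<le> C * E"
proof (intro conjI)
  have "inverse C * r \<le> 1 * r"
    using assms(1,5) by (intro mult_right_mono) (simp_all add: inverse_le_1_iff)
  then show "inverse C * r \<le> E"
    using assms(2) by simp
  show "E \<le> C * r"
    using assms(3,4) by simp
  have "2 * V \<le> C * V"
    using assms by (intro mult_right_mono) auto
  then have "E \<le> C * V"
    using assms(3) by linarith
  then show "inverse C * E \<le> V"
    using assms(5) by (simp add: field_simps)
  have "C * r \<le> C * E"
    using assms(2,5) by (intro mult_left_mono) auto
  then show "V \<le> C * E"
    using assms by linarith
qed

lemma setdist_chain_comparison:
  assumes "x \<in> S3" and "qf w < 0" and "0 < \<kappa>" and "\<kappa> * (norm w)\<^sup>2 \<le> - qf w"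
  defines "C \<equiv> max 2 (4 / \<kappa>)"
  shows "inverse C * setdist_with dE x (perp w) \<le> setdist_with dE x (chain w)"
    and "setdist_with dE x (chain w) \<le> C * setdist_with dE x (perp w)"
    and "inverse C * setdist_with dE x (chain w) \<le> setdist_with dvis x (chain w)"
    and "setdist_with dvis x (chain w) \<le> C * setdist_with dE x (chain w)"
proof -
  note bounds = setdist_chain_bounds[OF assms(1-4)]
  have "4 / \<kappa> * setdist_with dE x (perp w) \<le> C * setdist_with dE x (perp w)"
    using bounds(1) by (intro mult_right_mono) (simp_all add: C_def)
  then show "inverse C * setdist_with dE x (perp w) \<le> setdist_with dE x (chain w)"
    and "setdist_with dE x (chain w) \<le> C * setdist_with dE x (perp w)"
    and "inverse C * setdist_with dE x (chain w) \<le> setdist_with dvis x (chain w)"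
    and "setdist_with dvis x (chain w) \<le> C * setdist_with dE x (chain w)"
    using mutual_bounds_by_constant[OF bounds(1-3)] bounds(4) by (simp_all add: C_def)
qed

theorem lemma5p9:
  fixes K :: "cvec set"
  assumes "K \<subseteq> LC" and "dE_compact K"
  shows "(\<forall>x\<in>S3. \<forall>w\<in>K.
            setdist_with dE x (perp w) = cmod (herm x w) / (vnorm x * vnorm w))
       \<and> (\<exists>C::real. C \<ge> 1 \<and> (\<forall>x\<in>S3. \<forall>w\<in>K.
            inverse C * setdist_with dE x (perp w) \<le> setdist_with dE x (chain w)
          \<and> setdist_with dE x (chain w) \<le> C * setdist_with dE x (perp w)
          \<and> inverse C * setdist_with dE x (chain w) \<le> setdist_with dvis x (chain w)
          \<and> setdist_with dvis x (chain w) \<le> C * setdist_with dE x (chain w)))"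
proof -
  obtain \<kappa> where \<kappa>: "0 < \<kappa>" "\<And>w. w \<in> K \<Longrightarrow> \<kappa> * (norm w)\<^sup>2 \<le> - qf w"
    using dE_compact_negative_uniform[OF assms] by blast
  have "w \<in> LC" "qf w < 0" if "w \<in> K" for w
    using assms(1) that by (auto simp: LC_def)
  then show ?thesis
    using \<kappa> by (intro conjI exI[of _ "max 2 (4 / \<kappa>)"] ballI)
      (auto simp: S3_def intro!: setdist_dE_perp setdist_chain_comparison)
qed

end
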